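(* Let $1<p<\infty$, $x_0\in X$, $B_\rho=B(x_0,\rho)$, and let $\Omega\subset X$ be a bounded open set with $x_0\in\Omega$. If \[ \int_0^\delta\Bigl(\frac{\rho}{\mu(B_\rho)}\Bigr)^{1/(p-1)}d\rho=\infty\quad\text{for some }\delta>0, \] or equivalently $\sum_{k=k_0}^\infty\bigl(2^{-kp}/\mu(B_{2^{-k}})\bigr)^{1/(p-1)}=\infty$ for some integer $k_0\ge0$, then $\mathrm{cap}_p(\{x_0\},\Omega)=C_p(\{x_0\})=0$.
   Context: $(X,d,\mu)$ is a metric space (at least two points) with a positive complete Borel measure $\mu$, $0<\mu(B)<\infty$ for all balls; no doubling or Poincaré assumption. $g_u$ is the minimal $p$-weak upper gradient (a Borel $g\ge0$ with $|u(\gamma(0))-u(\gamma(l_\gamma))|\le\int_\gamma g\,ds$ for all nonconstant compact rectifiable curves outside a family of zero $p$-modulus). $N^{1,p}(X)$: everywhere-defined $u$ with $\|u\|_{N^{1,p}(X)}^p=\int|u|^p+\inf_g\int g^p<\infty$. $C_p(E)=\inf\|u\|^p_{N^{1,p}(X)}$ over $u\in N^{1,p}(X)$ with $u\ge1$ on $E$; $\mathrm{cap}_p(E,\Omega)=\inf\int_\Omega g_u^p\,d\mu$ over $u\in N^{1,p}(X)$, $u\ge1$ on $E$, $u=0$ on $X\setminus\Omega$. *)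

theory Defs
  imports "HOL-Analysis.Analysis"
begin

definition epow :: "real \<Rightarrow> ennreal \<Rightarrow> ennreal" where
  "epow p x = (if x = \<infinity> then \<infinity> else ennreal (enn2real x powr p))"

definition curve_variation :: "(real \<Rightarrow> 'a::metric_space) \<Rightarrow> real \<Rightarrow> real \<Rightarrow> ennreal" where
  "curve_variation \<gamma> a b =
     (SUP nt \<in> {(n, t). t (0::nat) = a \<and> t n = b \<and> (\<forall>i<n. t i \<le> t (Suc i))}.
        ennreal (\<Sum>i<fst nt. dist (\<gamma> (snd nt i)) (\<gamma> (snd nt (Suc i)))))"

text \<open>A nonconstant compact rectifiable curve, parametrized by arc length on [0,l]
  (l = its length, l > 0).  Curves are represented as pairs (gamma, l).\<close>
definition arclength_curve :: "(real \<Rightarrow> 'a::metric_space) \<Rightarrow> real \<Rightarrow> bool" where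
  "arclength_curve \<gamma> l \<longleftrightarrow> 0 < l \<and> continuous_on {0..l} \<gamma> \<and>
     (\<forall>s t. 0 \<le> s \<and> s \<le> t \<and> t \<le> l \<longrightarrow> curve_variation \<gamma> s t = ennreal (t - s))"

definition line_integral :: "('a \<Rightarrow> ennreal) \<Rightarrow> (real \<Rightarrow> 'a) \<Rightarrow> real \<Rightarrow> ennreal" where
  "line_integral g \<gamma> l = (\<integral>\<^sup>+ t \<in> {0..l}. g (\<gamma> t) \<partial>lborel)"

definition p_modulus :: "'a::metric_space measure \<Rightarrow> real \<Rightarrow> ((real \<Rightarrow> 'a) \<times> real) set \<Rightarrow> ennreal" where
  "p_modulus M p \<Gamma> = (INF \<rho> \<in> {\<rho> :: 'a \<Rightarrow> ennreal. \<rho> \<in> borel_measurable borel \<and>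
        (\<forall>(\<gamma>, l) \<in> \<Gamma>. line_integral \<rho> \<gamma> l \<ge> 1)}. \<integral>\<^sup>+ x. epow p (\<rho> x) \<partial>M)"

definition p_weak_upper_gradient :: "'a::metric_space measure \<Rightarrow> real \<Rightarrow> ('a \<Rightarrow> real) \<Rightarrow> ('a \<Rightarrow> ennreal) \<Rightarrow> bool" where
  "p_weak_upper_gradient M p u g \<longleftrightarrow> g \<in> borel_measurable borel \<and>
     (\<exists>\<Gamma>. p_modulus M p \<Gamma> = 0 \<and>
        (\<forall>\<gamma> l. arclength_curve \<gamma> l \<and> (\<gamma>, l) \<notin> \<Gamma> \<longrightarrow>
           ennreal \<bar>u (\<gamma> 0) - u (\<gamma> l)\<bar> \<le> line_integral g \<gamma> l))"

text \<open>p-th power of the Newtonian norm (infinite if u is not in N^{1,p}).\<close>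
definition newton_norm_p :: "'a::metric_space measure \<Rightarrow> real \<Rightarrow> ('a \<Rightarrow> real) \<Rightarrow> ennreal" where
  "newton_norm_p M p u = (\<integral>\<^sup>+ x. ennreal (\<bar>u x\<bar> powr p) \<partial>M) +
      (INF g \<in> {g. p_weak_upper_gradient M p u g}. \<integral>\<^sup>+ x. epow p (g x) \<partial>M)"

definition newtonian :: "'a::metric_space measure \<Rightarrow> real \<Rightarrow> ('a \<Rightarrow> real) set" where
  "newtonian M p = {u. u \<in> borel_measurable M \<and> newton_norm_p M p u < \<infinity>}"

definition sobolev_cap :: "'a::metric_space measure \<Rightarrow> real \<Rightarrow> 'a set \<Rightarrow> ennreal" where
  "sobolev_cap M p E = (INF u \<in> {u \<in> newtonian M p. \<forall>x\<in>E. u x \<ge> 1}. newton_norm_p M p u)"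

text \<open>Variational capacity cap_p(E, Omega); the integral of g_u^p over Omega is written as the
  infimum over all p-weak upper gradients g of u of the integral of g^p over Omega.\<close>
definition var_cap :: "'a::metric_space measure \<Rightarrow> real \<Rightarrow> 'a set \<Rightarrow> 'a set \<Rightarrow> ennreal" where
  "var_cap M p E \<Omega> = (INF u \<in> {u \<in> newtonian M p. (\<forall>x\<in>E. u x \<ge> 1) \<and> (\<forall>x\<in>-\<Omega>. u x = 0)}.
      (INF g \<in> {g. p_weak_upper_gradient M p u g}. \<integral>\<^sup>+ x \<in> \<Omega>. epow p (g x) \<partial>M))"

end

theory Submission
  imports Defs
begin

(* The test functions are radial: u = sum over j <= k < n of (v k / S) * psi k (d(x0, x)), where
   psi k is the linear ramp from 1 on the ball of radius 2^-(k+1) down to 0 outside the ball of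
   radius 2^-k, v k = (2^(-kp) / mu(B(x0, 2^-k)))^(1/(p-1)) and S is the sum of the v k.  Along any
   arc-length parametrised curve the distance to x0 is 1-Lipschitz, so u has the genuine upper
   gradient g = sum of (v k / S) / 2^-(k+1) on the disjoint annuli.  This choice of weights gives
   the energy bound  int g^p <= 2^p S^(1-p),  which tends to 0 as n grows when the series of the
   v k diverges.  Divergence also excludes an atom at x0 (otherwise v k would decay geometrically),
   so the L^p part, bounded by mu(B(x0, 2^-j)), is small for large j.  The integral condition
   implies divergence of the series by comparing the integrand on each dyadic interval. *)

lemma arclength_curve_dist_le:
  assumes "arclength_curve \<gamma> l" "0 \<le> s" "s \<le> t" "t \<le> l"
  shows "dist (\<gamma> s) (\<gamma> t) \<le> t - s"
proof -
  let ?P = "{(n, tt). tt (0::nat) = s \<and> tt n = t \<and> (\<forall>i<n. tt i \<le> tt (Suc i))}"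
  have "(1, \<lambda>i. if i = 0 then s else t) \<in> ?P" using assms by auto
  then have "ennreal (dist (\<gamma> s) (\<gamma> t)) \<le> curve_variation \<gamma> s t"
    unfolding curve_variation_def by (rule SUP_upper2) simp
  also have "\<dots> = ennreal (t - s)" using assms unfolding arclength_curve_def by auto
  finally show ?thesis using assms by (auto simp: ennreal_le_iff2)
qed

lemma lipschitz_on_dist_arclength_curve:
  assumes "arclength_curve \<gamma> l"
  shows "1-lipschitz_on {0..l} (\<lambda>t. dist x0 (\<gamma> t))"
proof (rule lipschitz_onI)
  fix s t assume "s \<in> {0..l}" "t \<in> {0..l}"
  then have "dist (\<gamma> s) (\<gamma> t) \<le> dist s t"
    using arclength_curve_dist_le[OF assms, of s t] arclength_curve_dist_le[OF assms, of t s]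
    by (cases "s \<le> t") (auto simp: dist_real_def dist_commute)
  moreover have "dist (dist x0 (\<gamma> s)) (dist x0 (\<gamma> t)) \<le> dist (\<gamma> s) (\<gamma> t)"
    by (metis dist_commute dist_real_def dist_triangle3 abs_le_iff diff_le_eq minus_diff_eq add.commute)
  ultimately show "dist (dist x0 (\<gamma> s)) (dist x0 (\<gamma> t)) \<le> 1 * dist s t" by simp
qed simp

lemma lipschitz_upcrossing_interval:
  fixes r :: "real \<Rightarrow> real"
  assumes lip: "1-lipschitz_on {0..l} r" and "0 \<le> l" "r 0 \<le> \<alpha>" "\<beta> \<le> r l"
  obtains s1 s2 where "0 \<le> s1" "s1 \<le> s2" "s2 \<le> l" "\<beta> - \<alpha> \<le> s2 - s1"
    "\<And>t. s1 < t \<Longrightarrow> t < s2 \<Longrightarrow> \<alpha> < r t \<and> r t < \<beta>"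
proof -
  (* s2 is the first time at which r reaches \<beta>, and s1 the last time before s2 at which r \<le> \<alpha> *)
  have cont: "continuous_on {0..s} r" if "s \<le> l" for s
    using lipschitz_on_continuous_on[OF lipschitz_on_subset[OF lip]] that by auto
  define s2 where "s2 = Inf ({0..l} \<inter> r -` {\<beta>..})"
  have "s2 \<in> {0..l} \<inter> r -` {\<beta>..}"
    unfolding s2_def using assms cont[of l]
    by (intro closed_contains_Inf continuous_closed_preimage) (auto intro: bdd_belowI[of _ 0])
  then have s2: "0 \<le> s2" "s2 \<le> l" "\<beta> \<le> r s2" by auto
  have below: "r t < \<beta>" if "0 \<le> t" "t < s2" for t
    using that s2 cInf_lower[of t "{0..l} \<inter> r -` {\<beta>..}"] unfolding s2_def[symmetric]
    by (force intro: bdd_belowI[of _ 0])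
  define s1 where "s1 = Sup ({0..s2} \<inter> r -` {..\<alpha>})"
  have "s1 \<in> {0..s2} \<inter> r -` {..\<alpha>}"
    unfolding s1_def using assms s2 cont[of s2]
    by (intro closed_contains_Sup continuous_closed_preimage) (auto intro: bdd_aboveI[of _ s2])
  then have s1: "0 \<le> s1" "s1 \<le> s2" "r s1 \<le> \<alpha>" by auto
  have above: "\<alpha> < r t" if "s1 < t" "t \<le> s2" for t
    using that s1 cSup_upper[of t "{0..s2} \<inter> r -` {..\<alpha>}"] unfolding s1_def[symmetric]
    by (force intro: bdd_aboveI[of _ s2])
  have "r s2 - r s1 \<le> s2 - s1"
    using lipschitz_onD[OF lip, of s2 s1] s1 s2 by (simp add: dist_real_def)
  then show thesis
    using that[of s1 s2] s1 s2 above below by force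
qed

lemma lipschitz_crossing_interval:
  fixes r :: "real \<Rightarrow> real"
  assumes lip: "1-lipschitz_on {0..l} r" and l: "0 \<le> l"
    and crosses: "r 0 \<le> \<alpha> \<and> \<beta> \<le> r l \<or> r l \<le> \<alpha> \<and> \<beta> \<le> r 0"
  obtains s1 s2 where "0 \<le> s1" "s1 \<le> s2" "s2 \<le> l" "\<beta> - \<alpha> \<le> s2 - s1"
    "\<And>t. s1 < t \<Longrightarrow> t < s2 \<Longrightarrow> \<alpha> < r t \<and> r t < \<beta>"
  using crosses
proof (elim disjE conjE)
  assume "r 0 \<le> \<alpha>" "\<beta> \<le> r l"
  then show thesis by (rule lipschitz_upcrossing_interval[OF lip l]) (rule that)
next
  assume "r l \<le> \<alpha>" "\<beta> \<le> r 0"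
  have "1-lipschitz_on {0..l} (\<lambda>t. - r t)"
    using lip by (simp add: lipschitz_on_def dist_minus)
  moreover have "- r 0 \<le> - \<beta>" "- \<alpha> \<le> - r l" using \<open>r l \<le> \<alpha>\<close> \<open>\<beta> \<le> r 0\<close> by auto
  ultimately show thesis
  proof (rule lipschitz_upcrossing_interval[OF _ l])
    fix s1 s2 assume "0 \<le> s1" "s1 \<le> s2" "s2 \<le> l" "- \<alpha> - - \<beta> \<le> s2 - s1"
      and "\<And>t. s1 < t \<Longrightarrow> t < s2 \<Longrightarrow> - \<beta> < - r t \<and> - r t < - \<alpha>"
    then show thesis by (intro that[of s1 s2]) force+
  qed
qed

definition ramp :: "real \<Rightarrow> real \<Rightarrow> real \<Rightarrow> real" where
  "ramp a b s = (b - max a (min b s)) / (b - a)"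

lemma ramp_bounds: "a < b \<Longrightarrow> 0 \<le> ramp a b s \<and> ramp a b s \<le> 1"
  by (auto simp: ramp_def divide_simps)

lemma ramp_eq_1: "a < b \<Longrightarrow> s \<le> a \<Longrightarrow> ramp a b s = 1"
  by (auto simp: ramp_def)

lemma ramp_eq_0: "a < b \<Longrightarrow> b \<le> s \<Longrightarrow> ramp a b s = 0"
  by (auto simp: ramp_def)

lemma continuous_on_ramp [continuous_intros]:
  "continuous_on A f \<Longrightarrow> continuous_on A (\<lambda>x. ramp a b (f x))"
  unfolding ramp_def divide_inverse by (intro continuous_intros)

lemma ramp_diff_le_crossing_interval:
  fixes r :: "real \<Rightarrow> real"
  assumes lip: "1-lipschitz_on {0..l} r" and l: "0 \<le> l" and ab: "a < b"
  obtains s1 s2 where "0 \<le> s1" "s1 \<le> s2" "s2 \<le> l"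
    "(b - a) * \<bar>ramp a b (r 0) - ramp a b (r l)\<bar> \<le> s2 - s1"
    "\<And>t. s1 < t \<Longrightarrow> t < s2 \<Longrightarrow> a < r t \<and> r t < b"
proof -
  define c where "c s = max a (min b s)" for s
  define \<alpha> where "\<alpha> = min (c (r 0)) (c (r l))"
  define \<beta> where "\<beta> = max (c (r 0)) (c (r l))"
  have "(b - a) * \<bar>ramp a b (r 0) - ramp a b (r l)\<bar> = \<bar>c (r l) - c (r 0)\<bar>"
    using ab by (simp add: ramp_def c_def abs_divide diff_divide_distrib[symmetric])
  also have "\<dots> = \<beta> - \<alpha>" by (simp add: \<alpha>_def \<beta>_def abs_if min_def max_def)
  finally have diff: "(b - a) * \<bar>ramp a b (r 0) - ramp a b (r l)\<bar> = \<beta> - \<alpha>" .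
  have range: "a \<le> \<alpha>" "\<beta> \<le> b" using ab by (auto simp: \<alpha>_def \<beta>_def c_def)
  show thesis
  proof (cases "\<alpha> = \<beta>")
    case True
    then show thesis using that[of 0 0] diff l by simp
  next
    case False
    then have "r 0 \<le> \<alpha> \<and> \<beta> \<le> r l \<or> r l \<le> \<alpha> \<and> \<beta> \<le> r 0"
      by (auto simp: \<alpha>_def \<beta>_def c_def)
    then show thesis
    proof (rule lipschitz_crossing_interval[OF lip l])
      fix s1 s2 assume "0 \<le> s1" "s1 \<le> s2" "s2 \<le> l" "\<beta> - \<alpha> \<le> s2 - s1"
        and "\<And>t. s1 < t \<Longrightarrow> t < s2 \<Longrightarrow> \<alpha> < r t \<and> r t < \<beta>"
      then show thesis using that[of s1 s2] diff range by force
    qed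
  qed
qed

lemma borel_measurable_along_curve:
  fixes \<gamma> :: "real \<Rightarrow> 'a::metric_space"
  assumes "continuous_on {0..l} \<gamma>" "f \<in> borel_measurable borel"
  shows "(\<lambda>t. f (\<gamma> t) * indicator {0..l} t :: ennreal) \<in> borel_measurable lborel"
proof -
  define \<gamma>' where "\<gamma>' t = (if t \<in> {0..l} then \<gamma> t else \<gamma> 0)" for t
  have "\<gamma>' \<in> borel_measurable borel"
    unfolding \<gamma>'_def using assms(1) by (intro borel_measurable_continuous_on_if) simp_all
  then have "(\<lambda>t. f (\<gamma>' t) * indicator {0..l} t :: ennreal) \<in> borel_measurable lborel"
    using assms(2) by (simp add: measurable_lborel1)
  also have "(\<lambda>t. f (\<gamma>' t) * indicator {0..l} t) = (\<lambda>t. f (\<gamma> t) * indicator {0..l} t)"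
    by (auto simp: \<gamma>'_def indicator_def)
  finally show ?thesis .
qed

lemma line_integral_sum_cmult:
  fixes \<gamma> :: "real \<Rightarrow> 'a::metric_space"
  assumes "continuous_on {0..l} \<gamma>" "\<And>k. k \<in> K \<Longrightarrow> f k \<in> borel_measurable borel"
  shows "line_integral (\<lambda>x. \<Sum>k\<in>K. c k * f k x) \<gamma> l = (\<Sum>k\<in>K. c k * line_integral (f k) \<gamma> l)"
proof -
  have "line_integral (\<lambda>x. \<Sum>k\<in>K. c k * f k x) \<gamma> l
      = (\<integral>\<^sup>+ t. (\<Sum>k\<in>K. c k * (f k (\<gamma> t) * indicator {0..l} t)) \<partial>lborel)"
    unfolding line_integral_def by (simp add: sum_distrib_right mult.assoc)
  also have "\<dots> = (\<Sum>k\<in>K. c k * line_integral (f k) \<gamma> l)"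
    using borel_measurable_along_curve[OF assms] unfolding line_integral_def
    by (simp add: nn_integral_sum nn_integral_cmult)
  finally show ?thesis .
qed

lemma ramp_dist_le_line_integral:
  assumes \<gamma>: "arclength_curve \<gamma> l" and ab: "a < b"
  shows "ennreal ((b - a) * \<bar>ramp a b (dist x0 (\<gamma> 0)) - ramp a b (dist x0 (\<gamma> l))\<bar>)
    \<le> line_integral (indicator (ball x0 b - cball x0 a)) \<gamma> l"
proof -
  have l: "0 \<le> l" using \<gamma> by (simp add: arclength_curve_def)
  obtain s1 s2 where s: "0 \<le> s1" "s1 \<le> s2" "s2 \<le> l"
    "(b - a) * \<bar>ramp a b (dist x0 (\<gamma> 0)) - ramp a b (dist x0 (\<gamma> l))\<bar> \<le> s2 - s1"
    "\<And>t. s1 < t \<Longrightarrow> t < s2 \<Longrightarrow> a < dist x0 (\<gamma> t) \<and> dist x0 (\<gamma> t) < b"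
    using ramp_diff_le_crossing_interval[OF lipschitz_on_dist_arclength_curve[OF \<gamma>] l ab] by blast
  then have "ennreal ((b - a) * \<bar>ramp a b (dist x0 (\<gamma> 0)) - ramp a b (dist x0 (\<gamma> l))\<bar>)
      \<le> emeasure lborel {s1<..<s2}"
    by (simp add: ennreal_leI)
  also have "\<dots> = (\<integral>\<^sup>+ t. indicator {s1<..<s2} t \<partial>lborel)" by simp
  also have "\<dots> \<le> line_integral (indicator (ball x0 b - cball x0 a)) \<gamma> l"
    unfolding line_integral_def
  proof (intro nn_integral_mono)
    fix t
    show "indicator {s1<..<s2} t \<le> indicator (ball x0 b - cball x0 a) (\<gamma> t) * (indicator {0..l} t :: ennreal)"
      using s(1,3) s(5)[of t] by (auto simp: indicator_def)
  qed
  finally show ?thesis .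
qed

lemma upper_gradient_imp_p_weak_upper_gradient:
  assumes "g \<in> borel_measurable borel"
    and "\<And>\<gamma> l. arclength_curve \<gamma> l \<Longrightarrow> ennreal \<bar>u (\<gamma> 0) - u (\<gamma> l)\<bar> \<le> line_integral g \<gamma> l"
  shows "p_weak_upper_gradient M p u g"
proof -
  have "p_modulus M p {} \<le> (\<integral>\<^sup>+ x. epow p 0 \<partial>M)"
    unfolding p_modulus_def by (rule INF_lower) auto
  then have "p_modulus M p {} = 0" by (simp add: epow_def)
  then show ?thesis using assms unfolding p_weak_upper_gradient_def by blast
qed

lemma p_weak_upper_gradient_ramp_sum:
  fixes x0 :: "'a::metric_space"
  assumes ab: "\<And>k. k \<in> K \<Longrightarrow> a k < b k" and c: "\<And>k. k \<in> K \<Longrightarrow> 0 \<le> c k"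
  shows "p_weak_upper_gradient M p (\<lambda>x. \<Sum>k\<in>K. c k * ramp (a k) (b k) (dist x0 x))
    (\<lambda>x. \<Sum>k\<in>K. ennreal (c k / (b k - a k)) * indicator (ball x0 (b k) - cball x0 (a k)) x)"
    (is "p_weak_upper_gradient M p ?u ?g")
proof (rule upper_gradient_imp_p_weak_upper_gradient)
  fix \<gamma> :: "real \<Rightarrow> 'a" and l assume \<gamma>: "arclength_curve \<gamma> l"
  define \<Delta> where "\<Delta> k = \<bar>ramp (a k) (b k) (dist x0 (\<gamma> 0)) - ramp (a k) (b k) (dist x0 (\<gamma> l))\<bar>" for k
  have "\<bar>?u (\<gamma> 0) - ?u (\<gamma> l)\<bar> \<le> (\<Sum>k\<in>K. c k * \<Delta> k)"
    unfolding sum_subtractf[symmetric] \<Delta>_def using c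
    by (intro order.trans[OF sum_abs] sum_mono) (simp add: abs_mult right_diff_distrib[symmetric])
  then have "ennreal \<bar>?u (\<gamma> 0) - ?u (\<gamma> l)\<bar> \<le> ennreal (\<Sum>k\<in>K. c k * \<Delta> k)"
    by (rule ennreal_leI)
  also have "\<dots> = (\<Sum>k\<in>K. ennreal (c k * \<Delta> k))"
    using c by (intro sum_ennreal[symmetric]) (simp add: \<Delta>_def)
  also have "\<dots> = (\<Sum>k\<in>K. ennreal (c k / (b k - a k)) * ennreal ((b k - a k) * \<Delta> k))"
  proof (rule sum.cong)
    fix k assume "k \<in> K"
    then show "ennreal (c k * \<Delta> k) = ennreal (c k / (b k - a k)) * ennreal ((b k - a k) * \<Delta> k)"
      using ab[of k] c[of k] by (simp add: \<Delta>_def ennreal_mult[symmetric])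
  qed simp
  also have "\<dots> \<le> (\<Sum>k\<in>K. ennreal (c k / (b k - a k)) *
      line_integral (indicator (ball x0 (b k) - cball x0 (a k))) \<gamma> l)"
    unfolding \<Delta>_def using ab by (intro sum_mono mult_left_mono ramp_dist_le_line_integral[OF \<gamma>]) auto
  also have "\<dots> = line_integral ?g \<gamma> l"
    using \<gamma> by (intro line_integral_sum_cmult[symmetric] borel_measurable_indicator borel_open open_Diff)
      (auto simp: arclength_curve_def)
  finally show "ennreal \<bar>?u (\<gamma> 0) - ?u (\<gamma> l)\<bar> \<le> line_integral ?g \<gamma> l" .
qed (intro borel_measurable_sum borel_measurable_times_ennreal borel_measurable_const
      borel_measurable_indicator borel_open open_Diff open_ball closed_cball)

lemma newton_norm_p_le:
  assumes "p_weak_upper_gradient M p u g" "0 \<le> p" "B \<in> sets M"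
    and "\<And>x. \<bar>u x\<bar> \<le> 1" "\<And>x. x \<notin> B \<Longrightarrow> u x = 0"
  shows "newton_norm_p M p u \<le> emeasure M B + (\<integral>\<^sup>+ x. epow p (g x) \<partial>M)"
proof -
  have "(\<integral>\<^sup>+ x. ennreal (\<bar>u x\<bar> powr p) \<partial>M) \<le> (\<integral>\<^sup>+ x. indicator B x \<partial>M)"
    using assms(2,4,5) by (intro nn_integral_mono) (auto simp: indicator_def powr_le1)
  moreover have "(INF g \<in> {g. p_weak_upper_gradient M p u g}. \<integral>\<^sup>+ x. epow p (g x) \<partial>M)
      \<le> (\<integral>\<^sup>+ x. epow p (g x) \<partial>M)"
    using assms(1) by (intro INF_lower) simp
  ultimately show ?thesis
    unfolding newton_norm_p_def using assms(3) by (intro add_mono) auto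
qed

lemma var_cap_le:
  assumes "u \<in> newtonian M p" "\<And>x. x \<in> E \<Longrightarrow> 1 \<le> u x" "\<And>x. x \<notin> \<Omega> \<Longrightarrow> u x = 0"
    and "p_weak_upper_gradient M p u g"
  shows "var_cap M p E \<Omega> \<le> (\<integral>\<^sup>+ x. epow p (g x) \<partial>M)"
proof -
  have "var_cap M p E \<Omega> \<le> (INF g \<in> {g. p_weak_upper_gradient M p u g}. \<integral>\<^sup>+ x \<in> \<Omega>. epow p (g x) \<partial>M)"
    unfolding var_cap_def using assms(1-3) by (intro INF_lower) auto
  also have "\<dots> \<le> (\<integral>\<^sup>+ x \<in> \<Omega>. epow p (g x) \<partial>M)"
    using assms(4) by (intro INF_lower) simp
  also have "\<dots> \<le> (\<integral>\<^sup>+ x. epow p (g x) \<partial>M)"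
    by (intro nn_integral_mono) (simp add: indicator_def)
  finally show ?thesis .
qed

lemma sobolev_cap_le:
  "u \<in> newtonian M p \<Longrightarrow> (\<And>x. x \<in> E \<Longrightarrow> 1 \<le> u x) \<Longrightarrow> sobolev_cap M p E \<le> newton_norm_p M p u"
  unfolding sobolev_cap_def by (intro INF_lower) auto

lemma epow_sum_disjoint_indicator:
  assumes K: "finite K" and disj: "disjoint_family_on A K" and w: "\<And>k. k \<in> K \<Longrightarrow> 0 \<le> w k"
  shows "epow p (\<Sum>k\<in>K. ennreal (w k) * indicator (A k) x)
    = (\<Sum>k\<in>K. ennreal (w k powr p) * indicator (A k) x)"
proof (cases "\<exists>k\<in>K. x \<in> A k")
  case True
  then obtain k where k: "k \<in> K" "x \<in> A k" by blast
  have "x \<notin> A i" if "i \<in> K - {k}" for i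
    using disj k that by (auto simp: disjoint_family_on_def)
  then have single: "(\<Sum>i\<in>K. f i * indicator (A i) x) = f k" for f :: "_ \<Rightarrow> ennreal"
    using k by (simp add: sum.remove[OF K k(1)] sum.neutral)
  show ?thesis using w k by (simp add: single epow_def)
qed (simp add: epow_def)

lemma nn_integral_epow_step_function:
  assumes "finite K" "disjoint_family_on A K" "\<And>k. k \<in> K \<Longrightarrow> A k \<in> sets M"
    and "\<And>k. k \<in> K \<Longrightarrow> 0 \<le> w k"
  shows "(\<integral>\<^sup>+ x. epow p (\<Sum>k\<in>K. ennreal (w k) * indicator (A k) x) \<partial>M)
    = (\<Sum>k\<in>K. ennreal (w k powr p) * emeasure M (A k))"
proof -
  have "(\<integral>\<^sup>+ x. epow p (\<Sum>k\<in>K. ennreal (w k) * indicator (A k) x) \<partial>M)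
      = (\<integral>\<^sup>+ x. (\<Sum>k\<in>K. ennreal (w k powr p) * indicator (A k) x) \<partial>M)"
    using assms by (intro nn_integral_cong epow_sum_disjoint_indicator)
  also have "\<dots> = (\<Sum>k\<in>K. \<integral>\<^sup>+ x. ennreal (w k powr p) * indicator (A k) x \<partial>M)"
    using assms by (intro nn_integral_sum) auto
  also have "\<dots> = (\<Sum>k\<in>K. ennreal (w k powr p) * emeasure M (A k))"
    using assms by (intro sum.cong refl nn_integral_cmult_indicator)
  finally show ?thesis .
qed

lemma dyadic_annuli_disjoint:
  assumes "x \<in> ball x0 ((1/2) ^ i) - cball x0 ((1/2) ^ Suc i)"
    and "x \<in> ball x0 ((1/2) ^ j) - cball x0 ((1/2) ^ Suc j)"
  shows "i = j"
proof -
  have *: "False" if "dist x0 x < (1/2) ^ n" "(1/2) ^ Suc m < dist x0 x" "m < n" for m n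
  proof -
    have "((1/2::real) ^ n) \<le> (1/2) ^ Suc m" using \<open>m < n\<close> by (intro power_decreasing) auto
    then show False using that(1,2) by simp
  qed
  show "i = j"
    using assms *[of j i] *[of i j] by (cases i j rule: linorder_cases) auto
qed

lemma disjoint_family_dyadic_annuli:
  "disjoint_family_on (\<lambda>k. ball x0 ((1/2) ^ k) - cball x0 ((1/2) ^ Suc k)) K"
  unfolding disjoint_family_on_def using dyadic_annuli_disjoint by blast

definition dyadic_potential :: "(nat \<Rightarrow> real) \<Rightarrow> nat set \<Rightarrow> 'a::metric_space \<Rightarrow> 'a \<Rightarrow> real" where
  "dyadic_potential v K x0 x =
     (\<Sum>k\<in>K. v k / sum v K * ramp ((1/2) ^ Suc k) ((1/2) ^ k) (dist x0 x))"

definition dyadic_gradient :: "(nat \<Rightarrow> real) \<Rightarrow> nat set \<Rightarrow> 'a::metric_space \<Rightarrow> 'a \<Rightarrow> ennreal" where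
  "dyadic_gradient v K x0 x =
     (\<Sum>k\<in>K. ennreal (v k / sum v K / ((1/2) ^ k - (1/2) ^ Suc k)) *
        indicator (ball x0 ((1/2) ^ k) - cball x0 ((1/2) ^ Suc k)) x)"

lemma p_weak_upper_gradient_dyadic_potential:
  "(\<And>k. 0 \<le> v k) \<Longrightarrow> p_weak_upper_gradient M p (dyadic_potential v K x0) (dyadic_gradient v K x0)"
  unfolding dyadic_potential_def[abs_def] dyadic_gradient_def[abs_def]
  by (rule p_weak_upper_gradient_ramp_sum) (auto intro!: divide_nonneg_nonneg sum_nonneg)

lemma abs_dyadic_potential_le_1:
  assumes "\<And>k. 0 \<le> v k"
  shows "\<bar>dyadic_potential v K x0 x\<bar> \<le> 1"
proof -
  have c: "0 \<le> v k / sum v K" for k by (simp add: assms sum_nonneg)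
  have r: "0 \<le> ramp ((1/2) ^ Suc k) ((1/2) ^ k) s \<and> ramp ((1/2) ^ Suc k) ((1/2) ^ k) s \<le> 1" for k s
    by (rule ramp_bounds) simp
  have "0 \<le> dyadic_potential v K x0 x"
    unfolding dyadic_potential_def using c r by (intro sum_nonneg mult_nonneg_nonneg) auto
  moreover have "dyadic_potential v K x0 x \<le> (\<Sum>k\<in>K. v k / sum v K)"
    unfolding dyadic_potential_def using c r by (intro sum_mono mult_right_le_one_le) auto
  moreover have "(\<Sum>k\<in>K. v k / sum v K) \<le> 1"
    by (cases "sum v K = 0") (simp_all add: sum_divide_distrib[symmetric])
  ultimately show ?thesis by simp
qed

lemma dyadic_potential_center:
  assumes "0 < sum v K"
  shows "dyadic_potential v K x0 x0 = 1"
  using assms by (simp add: dyadic_potential_def ramp_eq_1 sum_divide_distrib[symmetric])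

lemma dyadic_potential_eq_0:
  assumes "K \<subseteq> {j..}" "(1/2) ^ j \<le> dist x0 x"
  shows "dyadic_potential v K x0 x = 0"
proof -
  have "ramp ((1/2) ^ Suc k) ((1/2) ^ k) (dist x0 x) = 0" if "k \<in> K" for k
  proof (rule ramp_eq_0)
    have "((1/2::real) ^ k) \<le> (1/2) ^ j" using assms(1) that by (intro power_decreasing) auto
    then show "(1/2) ^ k \<le> dist x0 x" using assms(2) by linarith
  qed simp
  then show ?thesis by (simp add: dyadic_potential_def)
qed

lemma continuous_on_dyadic_potential: "continuous_on A (dyadic_potential v K x0)"
  unfolding dyadic_potential_def[abs_def] by (intro continuous_intros)

lemma dyadic_energy_identity:
  fixes r m p S :: real
  assumes "0 < r" "0 < m" "1 < p" "0 < S"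
  defines "v \<equiv> (r powr p / m) powr (1 / (p - 1))"
  shows "(2 * v / (S * r)) powr p * m = 2 powr p * S powr (- p) * v"
proof -
  have v: "0 < v" using assms by (simp add: v_def)
  have "v powr (p - 1) = r powr p / m"
    using assms by (simp add: v_def powr_powr)
  then have vp: "v powr p = v * (r powr p / m)"
    using v by (metis powr_add powr_one diff_add_cancel add.commute less_imp_le)
  have "(2 * v / (S * r)) powr p = 2 powr p * v powr p * S powr (-p) * r powr (-p)"
    using assms v by (simp add: powr_divide powr_mult powr_minus divide_simps)
  also have "\<dots> = 2 powr p * S powr (-p) * v * (r powr p * r powr (-p)) / m"
    by (simp add: vp)
  also have "r powr p * r powr (-p) = 1" using assms by (simp add: powr_minus)
  finally show ?thesis using assms by simp
qed

lemma dyadic_interval_exists: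
  fixes \<rho> :: real
  assumes "0 < \<rho>" "\<rho> \<le> 1"
  obtains k where "(1/2) ^ Suc k < \<rho>" "\<rho> \<le> (1/2) ^ k"
proof -
  obtain n where "(1/2::real) ^ n < \<rho>" using real_arch_pow_inv[OF assms(1), of "1/2"] by auto
  moreover have "\<not> (1/2::real) ^ 0 < \<rho>" using assms(2) by simp
  ultimately obtain k where "\<not> (1/2::real) ^ k < \<rho>" "(1/2) ^ Suc k < \<rho>"
    using ex_least_nat_less[of "\<lambda>i. (1/2::real) ^ i < \<rho>"] by blast
  then show thesis using that by simp
qed

lemma filterlim_sum_atLeastLessThan_at_top:
  fixes f :: "nat \<Rightarrow> real"
  assumes nonneg: "\<And>k. 0 \<le> f k" and diverges: "\<not> summable f"
  shows "filterlim (\<lambda>n. sum f {j..<n}) at_top sequentially"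
proof -
  have "(\<lambda>n. \<Sum>k<n. ennreal (f k)) \<longlonglongrightarrow> (\<Sum>k. ennreal (f k))"
    by (rule summable_LIMSEQ) simp
  then have lim: "(\<lambda>n. ennreal (\<Sum>k<n. f k)) \<longlonglongrightarrow> top"
    using summable_iff_suminf_neq_top[OF nonneg diverges] nonneg by (simp add: sum_ennreal)
  have "filterlim (\<lambda>n. \<Sum>k<n. f k) at_top sequentially"
    unfolding filterlim_at_top
  proof
    fix Z :: real
    have "eventually (\<lambda>n. ennreal (max Z 0) < ennreal (\<Sum>k<n. f k)) sequentially"
      using order_tendstoD(1)[OF lim] by simp
    then show "eventually (\<lambda>n. Z \<le> (\<Sum>k<n. f k)) sequentially"
      by eventually_elim (simp add: ennreal_less_iff)
  qed
  then have "filterlim (\<lambda>n. - (\<Sum>k<j. f k) + (\<Sum>k<n. f k)) at_top sequentially"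
    by (rule filterlim_tendsto_add_at_top[OF tendsto_const])
  moreover have "eventually (\<lambda>n. - (\<Sum>k<j. f k) + (\<Sum>k<n. f k) \<le> sum f {j..<n}) sequentially"
    using eventually_ge_at_top[of j]
    by eventually_elim (simp add: atLeast0LessThan[symmetric] sum_diff_nat_ivl)
  ultimately show ?thesis by (rule filterlim_at_top_mono)
qed

definition capacity_weight :: "'a::metric_space measure \<Rightarrow> real \<Rightarrow> 'a \<Rightarrow> real \<Rightarrow> real" where
  "capacity_weight M p x0 r = (r powr p / measure M (ball x0 r)) powr (1 / (p - 1))"

definition ball_ratio :: "'a::metric_space measure \<Rightarrow> real \<Rightarrow> 'a \<Rightarrow> real \<Rightarrow> real" where
  "ball_ratio M p x0 \<rho> = (\<rho> / measure M (ball x0 \<rho>)) powr (1 / (p - 1))"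

lemma capacity_weight_dyadic:
  assumes "1 < p"
  shows "capacity_weight M p x0 ((1/2) ^ n)
    = (2 powr (- real n * p) / measure M (ball x0 (2 powr (- real n)))) powr (1 / (p - 1))"
proof -
  have "(1/2::real) ^ n = 2 powr (- real n)"
    by (simp add: powr_minus powr_realpow power_one_over inverse_eq_divide)
  then show ?thesis by (simp add: capacity_weight_def powr_powr)
qed

locale ball_measure_space =
  fixes M :: "'a::metric_space measure"
  assumes space_eq: "space M = UNIV"
    and sets_borel: "sets borel \<subseteq> sets M"
    and emeasure_ball: "\<And>x r. 0 < r \<Longrightarrow> 0 < emeasure M (ball x r) \<and> emeasure M (ball x r) < \<infinity>"
begin

lemma sets_borelD [measurable]: "A \<in> sets borel \<Longrightarrow> A \<in> sets M"
  using sets_borel by blast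

lemma emeasure_ball_eq_measure: "0 < r \<Longrightarrow> emeasure M (ball x r) = ennreal (measure M (ball x r))"
  using emeasure_ball by (simp add: emeasure_eq_ennreal_measure less_top)

lemma measure_ball_pos: "0 < r \<Longrightarrow> 0 < measure M (ball x r)"
  using emeasure_ball emeasure_ball_eq_measure by (metis ennreal_less_zero_iff)

lemma measure_ball_mono: "0 < r \<Longrightarrow> r \<le> s \<Longrightarrow> measure M (ball x r) \<le> measure M (ball x s)"
  using emeasure_ball[of s x]
  by (intro measure_mono_fmeasurable) (auto simp: fmeasurable_def less_top subset_ball)

lemma capacity_weight_eq_ball_ratio:
  assumes "0 < r" "1 < p"
  shows "capacity_weight M p x r = r * ball_ratio M p x r"
proof -
  define e where "e = 1 / (p - 1)"
  have pe: "p * e = e + 1" using assms(2) by (simp add: e_def field_simps)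
  have m: "0 < measure M (ball x r)" using measure_ball_pos[OF assms(1)] .
  have "(r powr p / measure M (ball x r)) powr e = r powr (p * e) / measure M (ball x r) powr e"
    using assms m by (simp add: powr_divide powr_powr)
  also have "\<dots> = r * (r / measure M (ball x r)) powr e"
    unfolding pe using assms m by (simp add: powr_add powr_divide)
  finally show ?thesis by (simp add: capacity_weight_def ball_ratio_def e_def)
qed

lemma ball_ratio_le:
  assumes "0 < s" "s \<le> \<rho>" "\<rho> \<le> t" "1 < p"
  shows "ball_ratio M p x \<rho> \<le> (t / measure M (ball x s)) powr (1 / (p - 1))"
  unfolding ball_ratio_def using assms measure_ball_pos measure_ball_mono[of s \<rho> x]
  by (intro powr_mono2 frac_le) auto

lemma ball_ratio_le_dyadic_majorant:
  assumes p: "1 < p" and \<rho>: "0 < \<rho>" "\<rho> < \<delta>"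
  shows "ennreal (ball_ratio M p x \<rho>)
    \<le> (\<Sum>k. ennreal (2 powr (1 / (p - 1)) * ball_ratio M p x ((1/2) ^ Suc k)) *
          indicator {(1/2) ^ Suc k <.. (1/2) ^ k} \<rho>)
      + ennreal ((\<delta> / measure M (ball x 1)) powr (1 / (p - 1))) * indicator {1<..<\<delta>} \<rho>"
proof (cases "\<rho> \<le> 1")
  case True
  then obtain k where k: "(1/2) ^ Suc k < \<rho>" "\<rho> \<le> (1/2) ^ k"
    using dyadic_interval_exists \<rho> by blast
  have "ball_ratio M p x \<rho> \<le> (2 * (1/2) ^ Suc k / measure M (ball x ((1/2) ^ Suc k))) powr (1 / (p - 1))"
    using k p by (intro ball_ratio_le) auto
  also have "\<dots> = 2 powr (1 / (p - 1)) * ball_ratio M p x ((1/2) ^ Suc k)"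
    unfolding ball_ratio_def using measure_ball_pos[of "(1/2) ^ Suc k" x]
    by (simp add: powr_mult[symmetric] mult.assoc)
  finally have "ennreal (ball_ratio M p x \<rho>)
      \<le> (\<Sum>i\<in>{k}. ennreal (2 powr (1 / (p - 1)) * ball_ratio M p x ((1/2) ^ Suc i)) *
          indicator {(1/2) ^ Suc i <.. (1/2) ^ i} \<rho>)"
    using k by (simp add: ennreal_leI)
  also have "\<dots> \<le> (\<Sum>i. ennreal (2 powr (1 / (p - 1)) * ball_ratio M p x ((1/2) ^ Suc i)) *
          indicator {(1/2) ^ Suc i <.. (1/2) ^ i} \<rho>)"
    by (intro sum_le_suminf) auto
  finally show ?thesis by (rule add_increasing2[rotated]) simp
next
  case False
  then have "ball_ratio M p x \<rho> \<le> (\<delta> / measure M (ball x 1)) powr (1 / (p - 1))"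
    using p \<rho> by (intro ball_ratio_le) auto
  then show ?thesis using False \<rho> by (intro add_increasing) (auto intro: ennreal_leI)
qed

lemma nn_integral_ball_ratio_le:
  assumes p: "1 < p"
  shows "(\<integral>\<^sup>+ \<rho> \<in> {0<..<\<delta>}. ennreal (ball_ratio M p x \<rho>) \<partial>lborel)
    \<le> ennreal (2 powr (1 / (p - 1))) * (\<Sum>k. ennreal (capacity_weight M p x ((1/2) ^ Suc k)))
      + ennreal ((\<delta> / measure M (ball x 1)) powr (1 / (p - 1))) * emeasure lborel {1<..<\<delta>}"
proof -
  define c where "c k = 2 powr (1 / (p - 1)) * ball_ratio M p x ((1/2) ^ Suc k)" for k
  define D where "D = (\<delta> / measure M (ball x 1)) powr (1 / (p - 1))"
  let ?I = "\<lambda>k. {(1/2::real) ^ Suc k <.. (1/2) ^ k}"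
  have "(\<integral>\<^sup>+ \<rho> \<in> {0<..<\<delta>}. ennreal (ball_ratio M p x \<rho>) \<partial>lborel)
      \<le> (\<integral>\<^sup>+ \<rho>. (\<Sum>k. ennreal (c k) * indicator (?I k) \<rho>) + ennreal D * indicator {1<..<\<delta>} \<rho> \<partial>lborel)"
    using ball_ratio_le_dyadic_majorant[OF p] unfolding c_def D_def
    by (intro nn_integral_mono) (simp split: split_indicator)
  also have "\<dots> = (\<Sum>k. \<integral>\<^sup>+ \<rho>. ennreal (c k) * indicator (?I k) \<rho> \<partial>lborel)
      + (\<integral>\<^sup>+ \<rho>. ennreal D * indicator {1<..<\<delta>} \<rho> \<partial>lborel)"
    by (simp add: nn_integral_add nn_integral_suminf)
  also have "(\<lambda>k. \<integral>\<^sup>+ \<rho>. ennreal (c k) * indicator (?I k) \<rho> \<partial>lborel)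
      = (\<lambda>k. ennreal (2 powr (1 / (p - 1))) * ennreal (capacity_weight M p x ((1/2) ^ Suc k)))"
  proof
    fix k
    have c: "0 \<le> c k" by (simp add: c_def ball_ratio_def)
    have "(\<integral>\<^sup>+ \<rho>. ennreal (c k) * indicator (?I k) \<rho> \<partial>lborel) = ennreal (c k) * emeasure lborel (?I k)"
      by (rule nn_integral_cmult_indicator) simp
    also have "emeasure lborel (?I k) = ennreal ((1/2) ^ Suc k)"
      by simp
    also have "ennreal (c k) * ennreal ((1/2) ^ Suc k) = ennreal (c k * (1/2) ^ Suc k)"
      using c by (intro ennreal_mult[symmetric]) simp_all
    also have "c k * (1/2) ^ Suc k = 2 powr (1 / (p - 1)) * capacity_weight M p x ((1/2) ^ Suc k)"
      using p by (simp add: c_def capacity_weight_eq_ball_ratio)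
    finally show "(\<integral>\<^sup>+ \<rho>. ennreal (c k) * indicator (?I k) \<rho> \<partial>lborel)
        = ennreal (2 powr (1 / (p - 1))) * ennreal (capacity_weight M p x ((1/2) ^ Suc k))"
      by (simp add: ennreal_mult capacity_weight_def)
  qed
  finally show ?thesis by (simp add: ennreal_suminf_cmult nn_integral_cmult_indicator D_def)
qed

lemma not_summable_capacity_weight:
  assumes p: "1 < p"
    and diverges: "(\<integral>\<^sup>+ \<rho> \<in> {0<..<\<delta>}. ennreal (ball_ratio M p x \<rho>) \<partial>lborel) = \<infinity>"
  shows "\<not> summable (\<lambda>k. capacity_weight M p x ((1/2) ^ k))"
proof
  assume "summable (\<lambda>k. capacity_weight M p x ((1/2) ^ k))"
  then have "summable (\<lambda>k. capacity_weight M p x ((1/2) ^ Suc k))"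
    using summable_Suc_iff[of "\<lambda>k. capacity_weight M p x ((1/2) ^ k)"] by blast
  then have "(\<Sum>k. ennreal (capacity_weight M p x ((1/2) ^ Suc k))) < \<infinity>"
    by (simp add: ennreal_suminf_neq_top less_top capacity_weight_def)
  moreover have "emeasure lborel {1<..<\<delta>} \<noteq> \<infinity>"
    by (cases "1 \<le> \<delta>") simp_all
  ultimately show False
    using nn_integral_ball_ratio_le[OF p, of x \<delta>] diverges
    by (simp add: ennreal_mult_less_top top_unique ennreal_mult_eq_top_iff)
qed

lemma continuous_imp_borel_measurable: "continuous_on UNIV f \<Longrightarrow> f \<in> borel_measurable M"
  using borel_measurable_continuous_onI[of f] sets_borel space_eq
  by (auto simp: measurable_def)

lemma summable_capacity_weight_if_atom:
  assumes p: "1 < p" and atom: "emeasure M {x} \<noteq> 0"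
  shows "summable (\<lambda>k. capacity_weight M p x ((1/2) ^ k))"
proof -
  define e where "e = 1 / (p - 1)"
  define q :: real where "q = (1/2) powr (p * e)"
  have e: "0 < e" using p by (simp add: e_def)
  have q: "q < 1" unfolding q_def using p e powr_less_mono'[of "1/2" 0 "p * e"] by simp
  have "emeasure M {x} \<le> emeasure M (ball x 1)"
    by (intro emeasure_mono) (auto intro: sets_borelD)
  then have "emeasure M {x} < \<infinity>"
    using emeasure_ball[of 1 x] by (auto intro: le_less_trans)
  then have m0: "0 < measure M {x}"
    using atom by (simp add: measure_def enn2real_positive_iff zero_less_iff_neq_zero)
  have m0_le: "measure M {x} \<le> measure M (ball x r)" if "0 < r" for r
    using emeasure_ball[OF that, of x] that
    by (intro measure_mono_fmeasurable) (auto simp: fmeasurable_def less_top intro: sets_borelD)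
  have "capacity_weight M p x ((1/2) ^ k) \<le> (((1/2) ^ k) powr p / measure M {x}) powr e" for k
    unfolding capacity_weight_def e_def[symmetric] using e m0 m0_le[of "(1/2) ^ k"]
    by (intro powr_mono2 divide_left_mono) auto
  also have "(((1/2) ^ k) powr p / measure M {x}) powr e = q ^ k / measure M {x} powr e" for k
  proof -
    have "((1/2::real) ^ k) powr (p * e) = ((1/2) powr real k) powr (p * e)"
      by (simp add: powr_realpow)
    also have "\<dots> = q ^ k"
      unfolding q_def by (subst powr_power) (simp_all add: powr_powr)
    finally show ?thesis using m0 by (simp add: powr_divide powr_powr)
  qed
  finally have bound: "norm (capacity_weight M p x ((1/2) ^ k)) \<le> q ^ k / measure M {x} powr e" for k
    by (simp add: capacity_weight_def)
  have "summable (\<lambda>k. q ^ k / measure M {x} powr e)"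
    using q by (intro summable_divide summable_geometric) (simp add: q_def)
  then show ?thesis using bound by (rule summable_comparison_test')
qed

lemma nn_integral_epow_dyadic_gradient:
  assumes p: "1 < p" and K: "finite K" and S: "0 < sum v K"
    and v: "v = (\<lambda>k. capacity_weight M p x0 ((1/2) ^ k))"
  shows "(\<integral>\<^sup>+ x. epow p (dyadic_gradient v K x0 x) \<partial>M) \<le> ennreal (2 powr p * sum v K powr (1 - p))"
proof -
  let ?S = "sum v K"
  let ?A = "\<lambda>k. ball x0 ((1/2) ^ k) - cball x0 ((1/2) ^ Suc k)"
  define w where "w k = v k / ?S / ((1/2) ^ k - (1/2) ^ Suc k)" for k
  have v0: "0 \<le> v k" for k
    unfolding v capacity_weight_def by simp
  have w: "w k = 2 * v k / (?S * (1/2) ^ k)" for k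
    by (simp add: w_def field_simps)
  have "(\<integral>\<^sup>+ x. epow p (dyadic_gradient v K x0 x) \<partial>M) = (\<Sum>k\<in>K. ennreal (w k powr p) * emeasure M (?A k))"
    unfolding dyadic_gradient_def w_def[symmetric] using K S v0
    by (intro nn_integral_epow_step_function disjoint_family_dyadic_annuli) (auto simp: w_def)
  also have "\<dots> \<le> (\<Sum>k\<in>K. ennreal (w k powr p * measure M (ball x0 ((1/2) ^ k))))"
  proof (intro sum_mono)
    fix k
    have "emeasure M (?A k) \<le> emeasure M (ball x0 ((1/2) ^ k))"
      by (intro emeasure_mono) (auto intro: sets_borelD)
    then show "ennreal (w k powr p) * emeasure M (?A k) \<le> ennreal (w k powr p * measure M (ball x0 ((1/2) ^ k)))"
      by (simp add: emeasure_ball_eq_measure ennreal_mult mult_left_mono)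
  qed
  also have "\<dots> = (\<Sum>k\<in>K. ennreal (2 powr p * ?S powr (- p) * v k))"
  proof (intro sum.cong refl arg_cong[where f = ennreal])
    fix k
    have vk: "v k = (((1/2) ^ k) powr p / measure M (ball x0 ((1/2) ^ k))) powr (1 / (p - 1))"
      by (simp add: v capacity_weight_def)
    show "w k powr p * measure M (ball x0 ((1/2) ^ k)) = 2 powr p * ?S powr (- p) * v k"
      unfolding w vk using p S measure_ball_pos by (intro dyadic_energy_identity) auto
  qed
  also have "\<dots> = ennreal (2 powr p * ?S powr (- p) * ?S)"
    using v0 by (simp add: sum_ennreal sum_distrib_left)
  also have "\<dots> = ennreal (2 powr p * ?S powr (1 - p))"
    using S powr_add[of ?S "- p" 1] by (simp add: mult.assoc)
  finally show ?thesis .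
qed

lemma emeasure_dyadic_balls_tendsto:
  "(\<lambda>j. emeasure M (ball x ((1/2) ^ j))) \<longlonglongrightarrow> emeasure M {x}"
proof -
  have "(\<Inter>j. ball x ((1/2::real) ^ j)) = {x}"
  proof (intro equalityI subsetI)
    fix y assume y: "y \<in> (\<Inter>j. ball x ((1/2::real) ^ j))"
    show "y \<in> {x}"
    proof (rule ccontr)
      assume "y \<notin> {x}"
      then obtain n where "(1/2::real) ^ n < dist x y"
        using real_arch_pow_inv[of "dist x y" "1/2"] by auto
      moreover have "dist x y < (1/2) ^ n" using y by auto
      ultimately show False by simp
    qed
  qed auto
  moreover have "(\<lambda>j. emeasure M (ball x ((1/2) ^ j))) \<longlonglongrightarrow> emeasure M (\<Inter>j. ball x ((1/2) ^ j))"
    using emeasure_ball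
    by (intro Lim_emeasure_decseq decseq_SucI) (auto intro: sets_borelD simp: subset_ball less_top[symmetric])
  ultimately show ?thesis by simp
qed

lemma capacities_le_dyadic_potential:
  assumes p: "1 < p" and K: "finite K" "K \<subseteq> {j..}" and S: "0 < sum v K"
    and v: "v = (\<lambda>k. capacity_weight M p x0 ((1/2) ^ k))" and \<Omega>: "ball x0 ((1/2) ^ j) \<subseteq> \<Omega>"
  shows "var_cap M p {x0} \<Omega> \<le> ennreal (2 powr p * sum v K powr (1 - p))"
    and "sobolev_cap M p {x0} \<le> emeasure M (ball x0 ((1/2) ^ j)) + ennreal (2 powr p * sum v K powr (1 - p))"
proof -
  let ?u = "dyadic_potential v K x0" and ?g = "dyadic_gradient v K x0"
  let ?E = "ennreal (2 powr p * sum v K powr (1 - p))"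
  have v0: "0 \<le> v k" for k by (simp add: v capacity_weight_def)
  have ug: "p_weak_upper_gradient M p ?u ?g"
    using v0 by (rule p_weak_upper_gradient_dyadic_potential)
  have energy: "(\<integral>\<^sup>+ x. epow p (?g x) \<partial>M) \<le> ?E"
    using nn_integral_epow_dyadic_gradient[OF p K(1) S v] .
  have outside: "?u x = 0" if "x \<notin> ball x0 ((1/2) ^ j)" for x
    using that K(2) by (intro dyadic_potential_eq_0) auto
  have norm: "newton_norm_p M p ?u \<le> emeasure M (ball x0 ((1/2) ^ j)) + ?E"
    using p v0 outside energy
    by (intro order.trans[OF newton_norm_p_le[OF ug] add_left_mono] abs_dyadic_potential_le_1) auto
  have "emeasure M (ball x0 ((1/2) ^ j)) + ?E < \<infinity>"
    using emeasure_ball[of "(1/2) ^ j" x0] by simp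
  with norm have "newton_norm_p M p ?u < \<infinity>" by (rule le_less_trans)
  then have newt: "?u \<in> newtonian M p"
    unfolding newtonian_def by (simp add: continuous_imp_borel_measurable continuous_on_dyadic_potential)
  have center: "?u x0 = 1" using S by (rule dyadic_potential_center)
  show "var_cap M p {x0} \<Omega> \<le> ?E"
  proof (rule order.trans[OF var_cap_le[OF newt _ _ ug] energy])
    show "dyadic_potential v K x0 x = 0" if "x \<notin> \<Omega>" for x
      using that \<Omega> by (intro outside) blast
  qed (simp add: center)
  show "sobolev_cap M p {x0} \<le> emeasure M (ball x0 ((1/2) ^ j)) + ?E"
    using center by (intro order.trans[OF sobolev_cap_le[OF newt] norm]) auto
qed

lemma capacities_of_point_le:
  assumes p: "1 < p" and diverges: "\<not> summable (\<lambda>k. capacity_weight M p x0 ((1/2) ^ k))"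
    and r: "0 < r" "ball x0 r \<subseteq> \<Omega>" and \<epsilon>: "0 < \<epsilon>"
  shows "var_cap M p {x0} \<Omega> \<le> ennreal \<epsilon> \<and> sobolev_cap M p {x0} \<le> ennreal \<epsilon>"
proof -
  define v where "v = (\<lambda>k. capacity_weight M p x0 ((1/2) ^ k))"
  have "emeasure M {x0} = 0"
    using summable_capacity_weight_if_atom[OF p] diverges by blast
  then have "eventually (\<lambda>j. emeasure M (ball x0 ((1/2) ^ j)) < ennreal (\<epsilon> / 2)) sequentially"
    using emeasure_dyadic_balls_tendsto[of x0] \<epsilon> by (intro order_tendstoD(2)) auto
  moreover have "(\<lambda>j. (1/2::real) ^ j) \<longlonglongrightarrow> 0" by (rule LIMSEQ_power_zero) simp
  then have "eventually (\<lambda>j. (1/2::real) ^ j < r) sequentially"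
    using r by (intro order_tendstoD(2)) auto
  ultimately obtain j where j: "emeasure M (ball x0 ((1/2) ^ j)) < ennreal (\<epsilon> / 2)" "(1/2) ^ j < r"
    by (metis (mono_tags, lifting) eventually_conj eventually_sequentially order_refl)
  have S: "filterlim (\<lambda>n. sum v {j..<n}) at_top sequentially"
    using diverges[folded v_def] by (intro filterlim_sum_atLeastLessThan_at_top) (simp_all add: v_def capacity_weight_def)
  then have "((\<lambda>n. 2 powr p * sum v {j..<n} powr (1 - p)) \<longlongrightarrow> 0) sequentially"
    using p by (intro tendsto_mult_right_zero tendsto_neg_powr) auto
  from order_tendstoD(2)[OF this, of "\<epsilon> / 2"]
  have "eventually (\<lambda>n. 2 powr p * sum v {j..<n} powr (1 - p) < \<epsilon> / 2) sequentially"
    using \<epsilon> by simp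
  moreover have "eventually (\<lambda>n. 0 < sum v {j..<n}) sequentially"
    using S by (simp add: filterlim_at_top_dense)
  ultimately obtain n where n: "2 powr p * sum v {j..<n} powr (1 - p) < \<epsilon> / 2" "0 < sum v {j..<n}"
    by (metis (mono_tags, lifting) eventually_conj eventually_sequentially order_refl)
  have \<Omega>: "ball x0 ((1/2) ^ j) \<subseteq> \<Omega>" using j(2) r(2) subset_ball[of "(1/2) ^ j" r x0] by simp
  have K: "{j..<n} \<subseteq> {j..}" by auto
  note caps = capacities_le_dyadic_potential[OF p finite_atLeastLessThan K n(2) v_def \<Omega>]
  have E: "ennreal (2 powr p * sum v {j..<n} powr (1 - p)) \<le> ennreal (\<epsilon> / 2)"
    using n(1) by (simp add: ennreal_leI)
  have "var_cap M p {x0} \<Omega> \<le> ennreal (\<epsilon> / 2)"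
    using caps(1) E by (rule order.trans)
  also have "\<dots> \<le> ennreal \<epsilon>"
    using \<epsilon> by (intro ennreal_leI) simp
  finally have "var_cap M p {x0} \<Omega> \<le> ennreal \<epsilon>" .
  moreover have "sobolev_cap M p {x0} \<le> ennreal (\<epsilon> / 2) + ennreal (\<epsilon> / 2)"
    using caps(2) j(1) E by (elim order.trans) (intro add_mono; simp)
  ultimately show ?thesis using \<epsilon> by (simp flip: ennreal_plus)
qed

end

theorem lemma5p2:
  fixes M :: "'a::metric_space measure" and p :: real and x0 :: 'a and \<Omega> :: "'a set"
  assumes space: "space M = UNIV"
    and borel_sets: "sets (borel :: 'a measure) \<subseteq> sets M"
    and complete: "complete_measure M"
    and balls: "\<And>x r. 0 < r \<Longrightarrow> 0 < emeasure M (ball x r) \<and> emeasure M (ball x r) < \<infinity>"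
    and two_points: "\<exists>x y :: 'a. x \<noteq> y"
    and p: "1 < p"
    and \<Omega>: "bounded \<Omega>" "open \<Omega>" "x0 \<in> \<Omega>"
    and div: "(\<exists>\<delta>>0. (\<integral>\<^sup>+ \<rho> \<in> {0<..<\<delta>}.
                 ennreal ((\<rho> / measure M (ball x0 \<rho>)) powr (1 / (p - 1))) \<partial>lborel) = \<infinity>)
            \<or> (\<exists>k0::nat. (\<Sum>k. ennreal ((2 powr (- real (k + k0) * p)
                   / measure M (ball x0 (2 powr (- real (k + k0))))) powr (1 / (p - 1)))) = \<infinity>)"
  shows "var_cap M p {x0} \<Omega> = 0 \<and> sobolev_cap M p {x0} = 0"
proof -
  interpret ball_measure_space M using space borel_sets balls by unfold_locales
  have "\<not> summable (\<lambda>k. capacity_weight M p x0 ((1/2) ^ k))"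
    using div
  proof (elim disjE exE conjE)
    fix \<delta> assume "(\<integral>\<^sup>+ \<rho> \<in> {0<..<\<delta>}.
        ennreal ((\<rho> / measure M (ball x0 \<rho>)) powr (1 / (p - 1))) \<partial>lborel) = \<infinity>"
    then show ?thesis using not_summable_capacity_weight[OF p] by (simp add: ball_ratio_def)
  next
    fix k0 assume "(\<Sum>k. ennreal ((2 powr (- real (k + k0) * p)
        / measure M (ball x0 (2 powr (- real (k + k0))))) powr (1 / (p - 1)))) = \<infinity>"
    then have "\<not> summable (\<lambda>k. capacity_weight M p x0 ((1/2) ^ (k + k0)))"
      using ennreal_suminf_neq_top by (force simp: capacity_weight_dyadic[OF p])
    then show ?thesis
      using summable_iff_shift[of "\<lambda>k. capacity_weight M p x0 ((1/2) ^ k)" k0] by simp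
  qed
  moreover obtain r where "0 < r" "ball x0 r \<subseteq> \<Omega>" using \<Omega>(2,3) open_contains_ball by blast
  ultimately have small: "var_cap M p {x0} \<Omega> \<le> ennreal \<epsilon> \<and> sobolev_cap M p {x0} \<le> ennreal \<epsilon>"
    if "0 < \<epsilon>" for \<epsilon>
    using capacities_of_point_le[OF p] that by blast
  have "var_cap M p {x0} \<Omega> \<le> 0" "sobolev_cap M p {x0} \<le> 0"
    by (rule ennreal_le_epsilon, use small in simp)+
  then show ?thesis by simp
qed

end
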